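(* Let $\mathcal{X}$ be an input space and let $f_1$ and $f_0$ be probability distributions on $\mathcal{X}$ (of positive and negative examples, respectively). Let $\alpha \in [0,1)$ and $\beta \in (\alpha,1]$, and define the mixtures $$f = \alpha f_1 + (1-\alpha) f_0, \qquad g = \beta f_1 + (1-\beta) f_0$$ ($f$ is the distribution of unlabeled data, $g$ the distribution of the (possibly noisy) positively labeled data). (i) For a classifier $h:\mathcal{X}\to\{0,1\}$ define the true positive rate $\gamma = \mathbb{E}_{f_1}[h(x)]$, the false positive rate $\eta = \mathbb{E}_{f_0}[h(x)]$, and the positive-unlabeled rates $\gamma^{pu} = \mathbb{E}_{g}[h(x)]$, $\eta^{pu} = \mathbb{E}_{f}[h(x)]$. Then $$\gamma = \frac{(1-\alpha)\gamma^{pu} - (1-\beta)\eta^{pu}}{\beta-\alpha}, \qquad \eta = \frac{\beta\eta^{pu} - \alpha\gamma^{pu}}{\beta-\alpha}.$$ (ii) Let $c \in (0,1)$ (in the paper $c = |X_1|/(|X|+|X_1|)$, where $X_1$ is the labeled sample and $X$ the unlabeled sample), define the precision $\rho = \dfrac{\alpha\,\mathbb{E}_{f_1}[h(x)]}{\mathbb{E}_{f}[h(x)]}$ and the positive-unlabeled precision $\rho^{pu} = \dfrac{c\,\mathbb{E}_{g}[h(x)]}{\mathbb{E}_{cg+(1-c)f}[h(x)]}$. Then, whenever these quantities are defined, $$\rho = \frac{\alpha(1-\alpha)}{\beta-\alpha}\left(\frac{1-c}{c}\cdot\frac{\rho^{pu}}{1-\rho^{pu}} - \frac{1-\beta}{1-\alpha}\right),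 \qquad\text{and also}\qquad \rho = \frac{\alpha\gamma}{\eta^{pu}}.$$ (iii) Consider a family of classifiers $\{h_\eta\}_{\eta\in[0,1]}$, $h_\eta:\mathcal{X}\to\{0,1\}$, where $\eta$ is the false positive rate of $h_\eta$, i.e. $\mathbb{E}_{f_0}[h_\eta(x)] = \eta$. Let $\gamma(\eta) = \mathbb{E}_{f_1}[h_\eta(x)]$, $\gamma^{pu}(\eta) = \mathbb{E}_g[h_\eta(x)]$, $\eta^{pu}(\eta) = \mathbb{E}_f[h_\eta(x)]$, and assume $\gamma$ is differentiable on $[0,1]$ with $\gamma(0)=0$ and $\gamma(1)=1$. Define $\mathrm{AUC} = \int_0^1 \gamma(\eta)\,d\eta$ and $\mathrm{AUC}^{pu} = \int_0^1 \gamma^{pu}(\eta)\,\frac{d\eta^{pu}(\eta)}{d\eta}\,d\eta$. Then $$\mathrm{AUC} = \frac{\mathrm{AUC}^{pu} - \frac{1-(\beta-\alpha)}{2}}{\beta-\alpha}.$$ Moreover, $\mathrm{AUC} > \mathrm{AUC}^{pu}$ if and only if $\mathrm{AUC}^{pu} > 1/2$ and $\beta-\alpha < 1$.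
   Context: $\mathbb{E}_p[\cdot]$ denotes expectation with respect to the distribution $p$ on $\mathcal{X}$. Output $1$ of a classifier means "positive". $\mathrm{AUC}$ is the area under the ROC curve $\eta\mapsto\gamma(\eta)$ (true positive rate against false positive rate), and $\mathrm{AUC}^{pu}$ is the area under the positive-unlabeled ROC curve obtained by plotting $\gamma^{pu}$ against $\eta^{pu}$ along the same family of classifiers. *)

theory Defs
  imports "HOL-Probability.Probability"
begin

definition mixture :: "real \<Rightarrow> 'a measure \<Rightarrow> 'a measure \<Rightarrow> 'a measure" where
  "mixture a M N = measure_of (space M) (sets M)
     (\<lambda>A. ennreal a * emeasure M A + ennreal (1 - a) * emeasure N A)"

definition classifier :: "'a measure \<Rightarrow> ('a \<Rightarrow> real) \<Rightarrow> bool" where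
  "classifier M h \<longleftrightarrow> h \<in> borel_measurable M \<and> (\<forall>x\<in>space M. h x = 0 \<or> h x = 1)"

end

theory Submission
  imports Defs
begin

text \<open>For a 0/1-valued classifier every expectation is the probability of the positive region,
  and probabilities are affine in the mixture weight. Hence the unlabeled and labeled rates
  \<open>\<eta>pu = \<alpha>\<gamma> + (1 - \<alpha>)\<eta>\<close> and \<open>\<gamma>pu = \<beta>\<gamma> + (1 - \<beta>)\<eta>\<close> form an invertible linear system in
  \<open>(\<gamma>, \<eta>)\<close>, which gives (i) and, combined with the odds of \<open>\<rho>pu\<close>, (ii). For (iii) the PU-ROC
  integrand \<open>(\<beta>\<gamma> + (1 - \<beta>)\<eta>)(\<alpha>\<gamma>' + 1 - \<alpha>)\<close> splits into the exact derivatives of \<open>\<gamma>\<^sup>2/2\<close> and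
  \<open>\<eta>\<gamma>\<close>, a multiple of \<open>\<gamma>\<close> and a multiple of \<open>\<eta>\<close>; the boundary values \<open>\<gamma>(0) = 0\<close>,
  \<open>\<gamma>(1) = 1\<close> leave \<open>AUCpu = (\<beta> - \<alpha>) AUC + (1 - (\<beta> - \<alpha>))/2\<close>.\<close>

lemma sets_mixture [simp]: "sets (mixture a M N) = sets M"
  unfolding mixture_def by (simp add: sets.sigma_sets_eq)

lemma space_mixture [simp]: "space (mixture a M N) = space M"
  unfolding mixture_def by simp

lemma emeasure_mixture:
  assumes "sets N = sets M" and "A \<in> sets M"
  shows "emeasure (mixture a M N) A = ennreal a * emeasure M A + ennreal (1 - a) * emeasure N A"
proof -
  let ?\<mu> = "\<lambda>A. ennreal a * emeasure M A + ennreal (1 - a) * emeasure N A"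
  have "positive (sets M) ?\<mu>"
    by (simp add: positive_def)
  moreover have "countably_additive (sets M) ?\<mu>"
  proof (rule countably_additiveI)
    fix B :: "nat \<Rightarrow> _"
    assume B: "range B \<subseteq> sets M" "disjoint_family B" "\<Union> (range B) \<in> sets M"
    have "(\<Sum>i. ?\<mu> (B i)) = ennreal a * (\<Sum>i. emeasure M (B i)) + ennreal (1 - a) * (\<Sum>i. emeasure N (B i))"
      by (simp add: suminf_add[symmetric] ennreal_suminf_cmult)
    then show "(\<Sum>i. ?\<mu> (B i)) = ?\<mu> (\<Union> (range B))"
      using B assms(1) by (simp add: suminf_emeasure)
  qed
  ultimately show ?thesis
    unfolding mixture_def by (rule emeasure_measure_of_sigma[OF sets.sigma_algebra_axioms _ _ assms(2)])
qed

lemma finite_measure_mixture: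
  assumes "finite_measure M" "finite_measure N" "sets N = sets M"
  shows "finite_measure (mixture a M N)"
proof (rule finite_measureI)
  have "emeasure (mixture a M N) (space M) = ennreal a * emeasure M (space M) + ennreal (1 - a) * emeasure N (space M)"
    using assms(3) by (intro emeasure_mixture) auto
  then show "emeasure (mixture a M N) (space (mixture a M N)) \<noteq> \<infinity>"
    using finite_measure.emeasure_finite[OF assms(1), of "space M"]
      finite_measure.emeasure_finite[OF assms(2), of "space M"]
    by (simp add: ennreal_mult_eq_top_iff)
qed

lemma measure_mixture:
  assumes "finite_measure M" "finite_measure N" "sets N = sets M" "0 \<le> a" "a \<le> 1"
    and "A \<in> sets M"
  shows "measure (mixture a M N) A = a * measure M A + (1 - a) * measure N A"
proof -
  have "emeasure M A = ennreal (measure M A)" "emeasure N A = ennreal (measure N A)"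
    using assms(1,2) by (simp_all add: finite_measure.emeasure_eq_measure)
  then have "emeasure (mixture a M N) A = ennreal a * ennreal (measure M A) + ennreal (1 - a) * ennreal (measure N A)"
    using emeasure_mixture[OF assms(3,6)] by simp
  also have "\<dots> = ennreal (a * measure M A + (1 - a) * measure N A)"
    using assms(4,5) by (simp add: ennreal_mult[symmetric] ennreal_plus)
  finally show ?thesis
    using assms(4,5) by (simp add: measure_def del: ennreal_plus)
qed

lemma classifier_cong_sets:
  assumes "sets M = sets N"
  shows "classifier M h \<longleftrightarrow> classifier N h"
proof -
  have "space M = space N"
    using assms by (rule sets_eq_imp_space_eq)
  moreover have "h \<in> borel_measurable M \<longleftrightarrow> h \<in> borel_measurable N"
    using measurable_cong_sets[OF assms refl, of borel] by (rule arg_cong)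
  ultimately show ?thesis
    unfolding classifier_def by simp
qed

lemma classifier_positive_set_sets:
  assumes "classifier M h"
  shows "{x\<in>space M. h x = 1} \<in> sets M"
proof -
  have "h -` {1} \<inter> space M \<in> sets M"
    using assms unfolding classifier_def by (intro measurable_sets[where A = borel]) auto
  moreover have "h -` {1} \<inter> space M = {x\<in>space M. h x = 1}"
    by auto
  ultimately show ?thesis
    by simp
qed

lemma integral_classifier:
  assumes "classifier M h" "finite_measure M"
  shows "(LINT x|M. h x) = measure M {x\<in>space M. h x = 1}"
proof -
  let ?A = "{x\<in>space M. h x = 1}"
  have "(LINT x|M. h x) = (LINT x|M. indicator ?A x)"
    using assms(1) unfolding classifier_def
    by (intro Bochner_Integration.integral_cong) (auto simp: indicator_def)
  then show ?thesis
    using assms classifier_positive_set_sets[OF assms(1)]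
    by (simp add: finite_measure.emeasure_finite)
qed

lemma integral_classifier_mixture:
  assumes "classifier M h" "finite_measure M" "finite_measure N" "sets N = sets M"
    and "0 \<le> a" "a \<le> 1"
  shows "(LINT x|mixture a M N. h x) = a * (LINT x|M. h x) + (1 - a) * (LINT x|N. h x)"
proof -
  let ?A = "{x\<in>space M. h x = 1}"
  have "space N = space M"
    using assms(4) by (rule sets_eq_imp_space_eq)
  moreover have "classifier N h" "classifier (mixture a M N) h"
    using assms(1,4) classifier_cong_sets[of N M] classifier_cong_sets[of "mixture a M N" M] by auto
  ultimately have "(LINT x|N. h x) = measure N ?A" "(LINT x|mixture a M N. h x) = measure (mixture a M N) ?A"
    using integral_classifier[of N h] integral_classifier[of "mixture a M N" h]
      finite_measure_mixture[OF assms(2-4)] assms(3) by simp_all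
  moreover have "(LINT x|M. h x) = measure M ?A"
    using assms(1,2) by (rule integral_classifier)
  ultimately show ?thesis
    using measure_mixture[OF assms(2-6) classifier_positive_set_sets[OF assms(1)]] by simp
qed

lemma rates_from_mixture_rates:
  fixes \<alpha> \<beta> \<gamma> \<eta> :: real
  assumes "\<alpha> < \<beta>"
  shows "\<gamma> = ((1 - \<alpha>) * (\<beta> * \<gamma> + (1 - \<beta>) * \<eta>) - (1 - \<beta>) * (\<alpha> * \<gamma> + (1 - \<alpha>) * \<eta>)) / (\<beta> - \<alpha>)
       \<and> \<eta> = (\<beta> * (\<alpha> * \<gamma> + (1 - \<alpha>) * \<eta>) - \<alpha> * (\<beta> * \<gamma> + (1 - \<beta>) * \<eta>)) / (\<beta> - \<alpha>)"
  using assms by (simp add: field_simps)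

lemma odds_of_mixture_share:
  fixes c u v :: real
  assumes "c * v + (1 - c) * u \<noteq> 0"
  shows "(c * v / (c * v + (1 - c) * u)) / (1 - c * v / (c * v + (1 - c) * u)) = c * v / ((1 - c) * u)"
proof -
  define D where "D = c * v + (1 - c) * u"
  have "D \<noteq> 0"
    using assms unfolding D_def .
  then have "1 - c * v / D = (1 - c) * u / D"
    unfolding D_def by (simp add: field_simps)
  with \<open>D \<noteq> 0\<close> show ?thesis
    unfolding D_def[symmetric] by simp
qed

lemma precision_from_pu_precision:
  fixes \<alpha> \<beta> c \<gamma> \<eta> :: real
  defines "\<eta>pu \<equiv> \<alpha> * \<gamma> + (1 - \<alpha>) * \<eta>" and "\<gamma>pu \<equiv> \<beta> * \<gamma> + (1 - \<beta>) * \<eta>"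
  defines "\<rho>pu \<equiv> c * \<gamma>pu / (c * \<gamma>pu + (1 - c) * \<eta>pu)"
  assumes \<alpha>\<beta>: "\<alpha> < \<beta>" "\<alpha> < 1" and c: "0 < c" "c < 1"
    and nonzero: "\<eta>pu \<noteq> 0" "c * \<gamma>pu + (1 - c) * \<eta>pu \<noteq> 0"
  shows "\<alpha> * \<gamma> / \<eta>pu = \<alpha> * (1 - \<alpha>) / (\<beta> - \<alpha>) * ((1 - c) / c * (\<rho>pu / (1 - \<rho>pu)) - (1 - \<beta>) / (1 - \<alpha>))"
proof -
  have "\<rho>pu / (1 - \<rho>pu) = c * \<gamma>pu / ((1 - c) * \<eta>pu)"
    using odds_of_mixture_share[OF nonzero(2)] unfolding \<rho>pu_def .
  then have odds: "(1 - c) / c * (\<rho>pu / (1 - \<rho>pu)) = \<gamma>pu / \<eta>pu"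
    using c by simp
  have rates_eq: "\<gamma> = ((1 - \<alpha>) * \<gamma>pu - (1 - \<beta>) * \<eta>pu) / (\<beta> - \<alpha>)"
    using rates_from_mixture_rates[OF \<alpha>\<beta>(1)] unfolding \<gamma>pu_def \<eta>pu_def by (rule conjunct1)
  have "\<alpha> * (1 - \<alpha>) / (\<beta> - \<alpha>) * (\<gamma>pu / \<eta>pu - (1 - \<beta>) / (1 - \<alpha>))
      = \<alpha> * (((1 - \<alpha>) * \<gamma>pu - (1 - \<beta>) * \<eta>pu) / (\<beta> - \<alpha>)) / \<eta>pu"
  proof -
    have "\<beta> - \<alpha> \<noteq> 0" "1 - \<alpha> \<noteq> 0"
      using \<alpha>\<beta> by auto
    then show ?thesis
      using nonzero(1) by (simp add: divide_simps)
  qed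
  also have "\<dots> = \<alpha> * \<gamma> / \<eta>pu"
    using rates_eq by simp
  finally show ?thesis
    unfolding odds by (rule sym)
qed

lemma has_integral_mult_derivative_self:
  fixes g g' :: "real \<Rightarrow> real"
  assumes "a \<le> b" "\<And>t. t \<in> {a..b} \<Longrightarrow> (g has_real_derivative g' t) (at t within {a..b})"
  shows "((\<lambda>t. g t * g' t) has_integral (g b ^ 2 - g a ^ 2) / 2) {a..b}"
proof -
  have "((\<lambda>t. g t * g' t) has_integral ((\<lambda>t. g t ^ 2 / 2) b - (\<lambda>t. g t ^ 2 / 2) a)) {a..b}"
    by (rule fundamental_theorem_of_calculus)
      (auto simp: has_real_derivative_iff_has_vector_derivative[symmetric] assms
        intro!: derivative_eq_intros)
  then show ?thesis
    by (simp add: diff_divide_distrib)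
qed

lemma has_integral_derivative_id_mult:
  fixes g g' :: "real \<Rightarrow> real"
  assumes "a \<le> b" "\<And>t. t \<in> {a..b} \<Longrightarrow> (g has_real_derivative g' t) (at t within {a..b})"
  shows "((\<lambda>t. t * g' t + g t) has_integral b * g b - a * g a) {a..b}"
  by (rule fundamental_theorem_of_calculus)
    (auto simp: has_real_derivative_iff_has_vector_derivative[symmetric] assms
      intro!: derivative_eq_intros)

lemma pu_auc_eq:
  fixes g \<gamma>pu \<eta>pu :: "real \<Rightarrow> real" and \<alpha> \<beta> :: real
  assumes "g differentiable_on {0..1}" "g 0 = 0" "g 1 = 1"
    and "\<And>t. t \<in> {0..1} \<Longrightarrow> \<eta>pu t = \<alpha> * g t + (1 - \<alpha>) * t"
    and "\<And>t. t \<in> {0..1} \<Longrightarrow> \<gamma>pu t = \<beta> * g t + (1 - \<beta>) * t"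
  shows "integral {0..1} (\<lambda>t. \<gamma>pu t * vector_derivative \<eta>pu (at t within {0..1}))
           = (\<beta> - \<alpha>) * integral {0..1} g + (1 - (\<beta> - \<alpha>)) / 2"
proof -
  define g' where "g' t = vector_derivative g (at t within {0..1})" for t
  have deriv_g: "(g has_real_derivative g' t) (at t within {0..1})" if "t \<in> {0..1}" for t
    using assms(1) that unfolding g'_def differentiable_on_def has_real_derivative_iff_has_vector_derivative
    by (auto intro: vector_derivative_works[THEN iffD1])
  have deriv_\<eta>pu: "vector_derivative \<eta>pu (at t within {0..1}) = \<alpha> * g' t + (1 - \<alpha>)"
    if t: "t \<in> {0..1}" for t
  proof -
    have "((\<lambda>s. \<alpha> * g s + (1 - \<alpha>) * s) has_vector_derivative \<alpha> * g' t + (1 - \<alpha>)) (at t within {0..1})"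
      using deriv_g[OF t] unfolding has_real_derivative_iff_has_vector_derivative[symmetric]
      by (auto intro!: derivative_eq_intros)
    then have "(\<eta>pu has_vector_derivative \<alpha> * g' t + (1 - \<alpha>)) (at t within {0..1})"
      by (rule has_vector_derivative_transform_within[where d = 1]) (use t assms(4) in auto)
    then show ?thesis
      using t by (intro vector_derivative_within_closed_interval) auto
  qed
  \<comment> \<open>\<open>(\<beta>g + (1-\<beta>)t)(\<alpha>g' + 1-\<alpha>) = \<alpha>\<beta> gg' + \<alpha>(1-\<beta>)(tg' + g) + (\<beta> - \<alpha>) g + (1-\<alpha>)(1-\<beta>) t\<close>\<close>
  have "((\<lambda>t. \<alpha> * \<beta> * (g t * g' t) + \<alpha> * (1 - \<beta>) * (t * g' t + g t) + (\<beta> - \<alpha>) * g t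
            + (1 - \<alpha>) * (1 - \<beta>) * t) has_integral
          \<alpha> * \<beta> * (1 / 2) + \<alpha> * (1 - \<beta>) * 1 + (\<beta> - \<alpha>) * integral {0..1} g
            + (1 - \<alpha>) * (1 - \<beta>) * (1 / 2)) {0..1}"
    using has_integral_mult_derivative_self[of 0 1 g g'] has_integral_derivative_id_mult[of 0 1 g g']
      integrable_continuous_interval[OF differentiable_imp_continuous_on[OF assms(1)]]
      has_integral_mult_derivative_self[of 0 1 "\<lambda>t. t" "\<lambda>_. 1"] deriv_g assms(2,3)
    by (intro has_integral_add has_integral_mult_right) auto
  moreover have "\<gamma>pu t * vector_derivative \<eta>pu (at t within {0..1})
      = \<alpha> * \<beta> * (g t * g' t) + \<alpha> * (1 - \<beta>) * (t * g' t + g t) + (\<beta> - \<alpha>) * g t + (1 - \<alpha>) * (1 - \<beta>) * t"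
    if "t \<in> {0..1}" for t
    using that by (simp add: assms(5) deriv_\<eta>pu algebra_simps)
  ultimately have "integral {0..1} (\<lambda>t. \<gamma>pu t * vector_derivative \<eta>pu (at t within {0..1}))
      = \<alpha> * \<beta> * (1 / 2) + \<alpha> * (1 - \<beta>) * 1 + (\<beta> - \<alpha>) * integral {0..1} g
          + (1 - \<alpha>) * (1 - \<beta>) * (1 / 2)"
    by (metis (no_types, lifting) integral_cong integral_unique)
  also have "\<dots> = (\<beta> - \<alpha>) * integral {0..1} g + (1 - (\<beta> - \<alpha>)) / 2"
    by (simp add: field_simps)
  finally show ?thesis .
qed

lemma auc_from_pu_auc:
  fixes A Apu d :: real
  assumes "0 < d" "d \<le> 1" and Apu: "Apu = d * A + (1 - d) / 2"
  shows "A = (Apu - (1 - d) / 2) / d"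
    and "A > Apu \<longleftrightarrow> Apu > 1 / 2 \<and> d < 1"
proof -
  have "Apu - (1 - d) / 2 = d * A"
    unfolding Apu by simp
  with assms(1) show "A = (Apu - (1 - d) / 2) / d"
    by simp
  have "A - Apu = (1 - d) * (A - 1 / 2)" "Apu - 1 / 2 = d * (A - 1 / 2)"
    unfolding Apu by (simp_all add: algebra_simps diff_divide_distrib)
  then show "A > Apu \<longleftrightarrow> Apu > 1 / 2 \<and> d < 1"
    using assms(1,2) by (smt (verit) zero_less_mult_iff)
qed

theorem theorem1:
  fixes F1 F0 :: "'a measure" and \<alpha> \<beta> :: real and H :: "real \<Rightarrow> 'a \<Rightarrow> real"
  assumes "prob_space F1" and "prob_space F0" and "sets F0 = sets F1"
    and "0 \<le> \<alpha>" and "\<alpha> < 1" and "\<alpha> < \<beta>" and "\<beta> \<le> 1"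
  defines "F \<equiv> mixture \<alpha> F1 F0" and "G \<equiv> mixture \<beta> F1 F0"
  shows
    "(\<forall>h. classifier F1 h \<longrightarrow>
        (let \<gamma> = (LINT x|F1. h x); \<eta> = (LINT x|F0. h x);
             \<gamma>pu = (LINT x|G. h x); \<eta>pu = (LINT x|F. h x) in
         \<gamma> = ((1 - \<alpha>) * \<gamma>pu - (1 - \<beta>) * \<eta>pu) / (\<beta> - \<alpha>) \<and>
         \<eta> = (\<beta> * \<eta>pu - \<alpha> * \<gamma>pu) / (\<beta> - \<alpha>)))
   \<and> (\<forall>h c. classifier F1 h \<and> 0 < c \<and> c < 1 \<longrightarrow>
        (let \<gamma> = (LINT x|F1. h x); \<eta>pu = (LINT x|F. h x);
             \<rho> = \<alpha> * (LINT x|F1. h x) / (LINT x|F. h x);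
             \<rho>pu = c * (LINT x|G. h x) / (LINT x|mixture c G F. h x) in
         (LINT x|F. h x) \<noteq> 0 \<and> (LINT x|mixture c G F. h x) \<noteq> 0 \<and> \<rho>pu \<noteq> 1 \<longrightarrow>
         \<rho> = \<alpha> * (1 - \<alpha>) / (\<beta> - \<alpha>) *
               ((1 - c) / c * (\<rho>pu / (1 - \<rho>pu)) - (1 - \<beta>) / (1 - \<alpha>)) \<and>
         \<rho> = \<alpha> * \<gamma> / \<eta>pu))
   \<and> ((\<forall>t\<in>{0..1}. classifier F1 (H t) \<and> (LINT x|F0. H t x) = t) \<and>
       (\<lambda>t. LINT x|F1. H t x) differentiable_on {0..1} \<and>
       (LINT x|F1. H 0 x) = 0 \<and> (LINT x|F1. H 1 x) = 1 \<longrightarrow>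
       (let AUC = integral {0..1} (\<lambda>t. LINT x|F1. H t x);
            AUCpu = integral {0..1} (\<lambda>t. (LINT x|G. H t x) *
                      vector_derivative (\<lambda>s. LINT x|F. H s x) (at t within {0..1})) in
        AUC = (AUCpu - (1 - (\<beta> - \<alpha>)) / 2) / (\<beta> - \<alpha>) \<and>
        (AUC > AUCpu \<longleftrightarrow> AUCpu > 1 / 2 \<and> \<beta> - \<alpha> < 1)))"
proof -
  have fin: "finite_measure F1" "finite_measure F0"
    using assms(1,2) by (simp_all add: prob_space_def)
  have sets: "sets F = sets F1" "sets G = sets F1"
    unfolding F_def G_def by simp_all
  have "finite_measure F" "finite_measure G"
    unfolding F_def G_def using fin assms(3) by (simp_all add: finite_measure_mixture)
  note fin = fin this
  have integral_F: "(LINT x|F. h x) = \<alpha> * (LINT x|F1. h x) + (1 - \<alpha>) * (LINT x|F0. h x)"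
    and integral_G: "(LINT x|G. h x) = \<beta> * (LINT x|F1. h x) + (1 - \<beta>) * (LINT x|F0. h x)"
    if "classifier F1 h" for h
    unfolding F_def G_def using that fin assms(3-7) by (simp_all add: integral_classifier_mixture)
  have integral_mixture_GF: "(LINT x|mixture c G F. h x) = c * (LINT x|G. h x) + (1 - c) * (LINT x|F. h x)"
    if "classifier F1 h" "0 < c" "c < 1" for h c
  proof (rule integral_classifier_mixture[OF _ fin(4,3)])
    show "classifier G h"
      using that(1) classifier_cong_sets[of G F1] sets(2) by simp
  qed (use that sets in simp_all)
  have \<alpha>\<beta>: "0 < \<beta> - \<alpha>" "\<beta> - \<alpha> \<le> 1"
    using assms(4,6,7) by simp_all
  show ?thesis
  proof (intro conjI allI impI, goal_cases)
    case (1 h)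
    show ?case
      unfolding Let_def integral_F[OF 1] integral_G[OF 1]
      by (rule rates_from_mixture_rates[OF assms(6)])
  next
    case (2 h c)
    then have h: "classifier F1 h" and c: "0 < c" "c < 1"
      by simp_all
    show ?case
      unfolding Let_def integral_mixture_GF[OF h c] integral_F[OF h] integral_G[OF h]
      using precision_from_pu_precision[OF assms(6,5) c, of "LINT x|F1. h x" "LINT x|F0. h x"] by blast
  next
    case 3
    then have "integral {0..1} (\<lambda>t. (LINT x|G. H t x) *
                      vector_derivative (\<lambda>s. LINT x|F. H s x) (at t within {0..1}))
        = (\<beta> - \<alpha>) * integral {0..1} (\<lambda>t. LINT x|F1. H t x) + (1 - (\<beta> - \<alpha>)) / 2"
      by (intro pu_auc_eq) (simp_all add: integral_F integral_G)
    from auc_from_pu_auc[OF \<alpha>\<beta> this] show ?case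
      unfolding Let_def by (rule conjI)
  qed
qed

end
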